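(* Let $U=\mathbb{C}[[t]][t^{-1}]$ (formal Laurent series $a(t)$ in $t$), regarded as a differential commutative associative algebra with unit $1$ and derivation $\partial = d/dt$, and hence as a commutative vertex algebra with vacuum $1$, translation operator $\partial$, and $$Y(a(t),z)\,b(t)=(e^{z\partial}a(t))\,b(t)=i_{|z|<|t|}\,a(t+z)\,b(t),\qquad a(t),b(t)\in U,$$ where $i_{|z|<|t|}$ means expanding $a(t+z)$ in positive powers of $z/t$. Let $N=\mathbb{C}[\partial]\,n$ be a free $\mathbb{C}[\partial]$-module of rank $1$. Then there exists a unique vertex algebra structure on the $\mathbb{C}[\partial]$-module $V=U\oplus N$ (with translation operator $T=\partial$) such that $$Y(a(t),z)\,b(t)=i_{|z|<|t|}\,a(t+z)\,b(t),\qquad Y(n,z)\,n=0,\qquad Y(a(t),z)\,n=a(z)\,n$$ for all $a(t),b(t)\in U$. Moreover, the central series of the underlying Lie conformal algebra $V^{\mathrm{lie}}$ of $V$ (with $\lambda$-bracket $[a_\lambda b]=\sum_{n\ge 0}\frac{\lambda^n}{n!}a_{(n)}b$) stabilizes to $N$.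
   Context: Work over $\mathbb{C}$. A vertex algebra is a vector space with vacuum vector, infinitesimal translation operator $T$ and state-field correspondence $Y(a,z)=\sum_n a_{(n)}z^{-n-1}$ satisfying vacuum, translation invariance and locality axioms. The central series of a Lie conformal algebra $L$ is $L^{[0]}=L$, $L^{[k+1]}=[L,L^{[k]}]$, where $[A,B]$ is the $\mathbb{C}[\partial]$-submodule generated by all $a_{(j)}b$, $a\in A$, $b\in B$, $j\ge 0$; for finite (finitely generated over $\mathbb{C}[\partial]$) Lie conformal algebras it stabilizes to an ideal $L^{[\infty]}$. *)

theory Defs
  imports Complex_Main "HOL-Library.Product_Plus"
    "HOL-Computational_Algebra.Formal_Laurent_Series"
    "HOL-Computational_Algebra.Polynomial"
begin

text \<open>A vertex algebra on an additive group 'v with complex scalar multiplication sm,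
  vacuum vac, translation operator T, and n-th products Y n a b = a_(n) b
  (so Y(a,z) b = sum over n of a_(n) b z^(-n-1)).\<close>

definition vertex_algebra ::
  "(complex \<Rightarrow> 'v::ab_group_add \<Rightarrow> 'v) \<Rightarrow> 'v \<Rightarrow> ('v \<Rightarrow> 'v) \<Rightarrow> (int \<Rightarrow> 'v \<Rightarrow> 'v \<Rightarrow> 'v) \<Rightarrow> bool"
where
  "vertex_algebra sm vac T Y \<longleftrightarrow>
     \<comment> \<open>bilinearity of the products\<close>
     (\<forall>n a b c. Y n (a + b) c = Y n a c + Y n b c) \<and>
     (\<forall>n k a c. Y n (sm k a) c = sm k (Y n a c)) \<and>
     (\<forall>n a b c. Y n a (b + c) = Y n a b + Y n a c) \<and>
     (\<forall>n k a c. Y n a (sm k c) = sm k (Y n a c)) \<and>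
     \<comment> \<open>Y(a,z) is a field: a_(n) b = 0 for n large\<close>
     (\<forall>a b. \<exists>N. \<forall>n\<ge>N. Y n a b = 0) \<and>
     \<comment> \<open>vacuum axioms\<close>
     T vac = 0 \<and>
     (\<forall>n a. Y n vac a = (if n = -1 then a else 0)) \<and>
     (\<forall>n a. n \<ge> 0 \<longrightarrow> Y n a vac = 0) \<and>
     (\<forall>a. Y (-1) a vac = a) \<and>
     \<comment> \<open>translation invariance: [T, Y(a,z)] = d/dz Y(a,z)\<close>
     (\<forall>n a b. T (Y n a b) - Y n a (T b) = sm (- of_int n) (Y (n - 1) a b)) \<and>
     \<comment> \<open>locality: (z-w)^N [Y(a,z),Y(b,w)] = 0 for some N\<close>
     (\<forall>a b. \<exists>N::nat. \<forall>m n c.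
        (\<Sum>j\<in>{0..N}. sm ((-1) ^ j * of_nat (N choose j))
            (Y (m + int N - int j) a (Y (n + int j) b c)
             - Y (n + int j) b (Y (m + int N - int j) a c))) = 0)"

definition cd_span :: "(complex \<Rightarrow> 'v::ab_group_add \<Rightarrow> 'v) \<Rightarrow> ('v \<Rightarrow> 'v) \<Rightarrow> 'v set \<Rightarrow> 'v set"
where
  "cd_span sm T S = \<Inter>{M. S \<subseteq> M \<and> 0 \<in> M \<and> (\<forall>x\<in>M. \<forall>y\<in>M. x + y \<in> M)
       \<and> (\<forall>k. \<forall>x\<in>M. sm k x \<in> M) \<and> (\<forall>x\<in>M. T x \<in> M)}"

text \<open>[A,B] = C[d]-submodule generated by all a_(j) b, a in A, b in B, j \<ge> 0
  (the coefficients of the lambda-bracket).\<close>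
definition conf_bracket ::
  "(complex \<Rightarrow> 'v::ab_group_add \<Rightarrow> 'v) \<Rightarrow> ('v \<Rightarrow> 'v) \<Rightarrow> (int \<Rightarrow> 'v \<Rightarrow> 'v \<Rightarrow> 'v) \<Rightarrow> 'v set \<Rightarrow> 'v set \<Rightarrow> 'v set"
where
  "conf_bracket sm T Y A B = cd_span sm T {Y j a b | j a b. j \<ge> 0 \<and> a \<in> A \<and> b \<in> B}"

fun central_series ::
  "(complex \<Rightarrow> 'v::ab_group_add \<Rightarrow> 'v) \<Rightarrow> ('v \<Rightarrow> 'v) \<Rightarrow> (int \<Rightarrow> 'v \<Rightarrow> 'v \<Rightarrow> 'v) \<Rightarrow> nat \<Rightarrow> 'v set"
where
  "central_series sm T Y 0 = UNIV"
| "central_series sm T Y (Suc k) = conf_bracket sm T Y UNIV (central_series sm T Y k)"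

text \<open>U = C((t)) is complex fls; N = C[d] n is represented by polynomials:
  (0, p) stands for p(d) n.\<close>
type_synonym V = "complex fls \<times> complex poly"

definition V_smult :: "complex \<Rightarrow> V \<Rightarrow> V" where
  "V_smult c x = (fls_const c * fst x, smult c (snd x))"

definition V_T :: "V \<Rightarrow> V" where
  "V_T x = (fls_deriv (fst x), pCons 0 (snd x))"

definition V_vac :: V where "V_vac = (1, 0)"

definition V_n :: V where "V_n = (0, 1)"

text \<open>The n-th products on U given by Y(a(t),z) b(t) = (e^{z d} a(t)) b(t):
  a_(-k-1) b = (d^k a / k!) b and a_(n) b = 0 for n \<ge> 0.\<close>
definition U_prod :: "int \<Rightarrow> complex fls \<Rightarrow> complex fls \<Rightarrow> complex fls" where
  "U_prod n a b = (if n \<ge> 0 then 0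
     else fls_const (1 / of_nat (fact (nat (- n - 1)))) * (fls_deriv ^^ nat (- n - 1)) a * b)"

definition V_structure :: "(int \<Rightarrow> V \<Rightarrow> V \<Rightarrow> V) \<Rightarrow> bool" where
  "V_structure Y \<longleftrightarrow> vertex_algebra V_smult V_vac V_T Y
     \<and> (\<forall>n a b. Y n (a, 0) (b, 0) = (U_prod n a b, 0))
     \<and> (\<forall>n. Y n V_n V_n = 0)
     \<and> (\<forall>n a. Y n (a, 0) V_n = (0, [:fls_nth a (- n - 1):]))"

end

theory Submission
  imports Defs
begin

text \<open>
  Existence: the products inside U are prescribed, u_(m) n = u_{-m-1} n is forced, and
  translation covariance and skew-symmetry extend these to u_(m) (q(d) n) and (p(d) n)_(m) v,
  which are written down in closed form. Everything except locality is then a computation with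
  coefficients. For locality, U is commutative and N_(m) N = 0, so only the commutator of u_(m)
  with (q(d) n)_(k) acting on U matters. It vanishes when u is a power series and is a pure
  shift for u = 1/t; locality survives linear combinations and derivatives in u, and every
  Laurent series is a power series plus a finite combination of derivatives of 1/t.

  Uniqueness: translation covariance determines a_(m) (p(d) n) from a_(m) n, and locality
  applied to the vacuum expresses a_(m) b through the products b_(k) (a_(l) 1), whose right
  argument lies in N when a does.

  Central series: every product a_(j) b with j >= 0 lies in N, and (1/t)_(0) n = n, so
  [V, V] = [V, N] = N.
\<close>

unbundle fps_syntax

text \<open>If K m n is the coefficient of z^(-m-1) w^(-n-1) in a series K(z,w), then
  loc_sum sc N K m n is the corresponding coefficient of (z - w)^N K(z,w).\<close>
definition loc_sum ::
  "(complex \<Rightarrow> 'a \<Rightarrow> 'a) \<Rightarrow> nat \<Rightarrow> (int \<Rightarrow> int \<Rightarrow> 'a) \<Rightarrow> int \<Rightarrow> int \<Rightarrow> 'a::ab_group_add"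
  where "loc_sum sc N K m n =
    (\<Sum>j\<in>{0..N}. sc ((-1) ^ j * of_nat (N choose j)) (K (m + int N - int j) (n + int j)))"

lemma loc_sum_0: "loc_sum sc 0 K m n = sc 1 (K m n)"
  by (simp add: loc_sum_def)

lemma loc_sum_Suc:
  assumes add: "\<And>a b x. sc (a + b) x = sc a x + sc b x"
  shows "loc_sum sc (Suc N) K m n = loc_sum sc N K (m + 1) n - loc_sum sc N K m (n + 1)"
proof -
  have zero: "sc 0 x = 0" for x using add[of 0 0 x] by simp
  have neg: "sc (- a) x = - sc a x" for a x
    using add[of a "- a" x] by (simp add: zero eq_neg_iff_add_eq_0 add.commute)
  define f where "f j = K (m + int (Suc N) - int j) (n + int j)" for j
  have "loc_sum sc (Suc N) K m n = (\<Sum>j\<in>{0..Suc N}. sc ((-1) ^ j * of_nat (Suc N choose j)) (f j))"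
    by (simp add: loc_sum_def f_def)
  also have "\<dots> = sc 1 (f 0) + (\<Sum>j\<in>{0..N}. sc ((-1) ^ Suc j * of_nat (Suc N choose Suc j)) (f (Suc j)))"
    by (subst sum.atLeast0_atMost_Suc_shift) simp
  also have "\<dots> = sc 1 (f 0) + (\<Sum>j\<in>{0..N}. sc ((-1) ^ Suc j * of_nat (N choose Suc j)) (f (Suc j)))
      + (\<Sum>j\<in>{0..N}. sc ((-1) ^ Suc j * of_nat (N choose j)) (f (Suc j)))"
    unfolding sum.distrib[symmetric] add[symmetric] add.assoc
    by (intro arg_cong2[where f="(+)"] refl sum.cong) (simp_all add: algebra_simps)
  also have "sc 1 (f 0) + (\<Sum>j\<in>{0..N}. sc ((-1) ^ Suc j * of_nat (N choose Suc j)) (f (Suc j)))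
     = (\<Sum>j\<in>{0..Suc N}. sc ((-1) ^ j * of_nat (N choose j)) (f j))"
    by (simp only: sum.atLeast0_atMost_Suc_shift) (simp add: zero binomial_eq_0)
  also have "\<dots> = loc_sum sc N K (m + 1) n"
    by (simp add: sum.atLeast0_atMost_Suc loc_sum_def f_def algebra_simps zero binomial_eq_0)
  also have "(\<Sum>j\<in>{0..N}. sc ((-1) ^ Suc j * of_nat (N choose j)) (f (Suc j))) = - loc_sum sc N K m (n + 1)"
    by (simp add: loc_sum_def f_def neg sum_negf algebra_simps)
  finally show ?thesis by simp
qed

lemma loc_sum_eq_0_mono:
  assumes add: "\<And>a b x. sc (a + b) x = sc a x + sc b x"
    and "\<forall>m n. loc_sum sc N K m n = 0" and "N \<le> N'"
  shows "\<forall>m n. loc_sum sc N' K m n = 0"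
  using assms(3)
proof (induction N' rule: dec_induct)
  case base then show ?case using assms(2) by simp
next
  case (step k) then show ?case by (simp add: loc_sum_Suc[OF add])
qed

section \<open>Formal Laurent series and the products of U\<close>

lemma funpow_fls_deriv_add: "(fls_deriv ^^ r) (a + b) = (fls_deriv ^^ r) a + (fls_deriv ^^ r) b"
  by (induction r) auto

lemma funpow_fls_deriv_zero: "(fls_deriv ^^ r) 0 = 0"
  by (induction r) auto

lemma funpow_fls_deriv_const_mult:
  "(fls_deriv ^^ r) (fls_const c * a) = fls_const c * (fls_deriv ^^ r) a"
  by (induction r) auto

lemma funpow_fls_deriv_one: "(fls_deriv ^^ Suc r) 1 = 0"
  by (induction r) auto

lemma funpow_fls_deriv_Suc: "(fls_deriv ^^ Suc r) a = (fls_deriv ^^ r) (fls_deriv a)"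
  by (simp only: funpow_Suc_right comp_def)

lemma funpow_fls_deriv_X_inv_nth:
  "((fls_deriv ^^ r) fls_X_inv) $$ k = (if k = -1 - int r then (-1) ^ r * fact r else (0::complex))"
proof (induction r arbitrary: k)
  case 0 then show ?case by simp
next
  case (Suc r)
  have "((fls_deriv ^^ Suc r) (fls_X_inv :: complex fls)) $$ k = of_int (k + 1) * ((fls_deriv ^^ r) fls_X_inv) $$ (k + 1)"
    by simp
  also have "\<dots> = (if k = -1 - int (Suc r) then (-1) ^ Suc r * fact (Suc r) else 0)"
  proof (cases "k = -1 - int (Suc r)")
    case True
    then have k1: "k + 1 = -1 - int r" "of_int (k + 1) = - (of_nat (Suc r) :: complex)" by simp_all
    have hX: "((fls_deriv ^^ r) fls_X_inv) $$ (k + 1) = (-1) ^ r * (fact r :: complex)"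
      using Suc.IH[of "k + 1"] unfolding k1(1) by simp
    have "of_int (k + 1) * ((fls_deriv ^^ r) fls_X_inv) $$ (k + 1) = - (of_nat (Suc r)) * ((-1) ^ r * (fact r :: complex))"
      by (simp only: hX k1(2))
    also have "\<dots> = (-1) ^ Suc r * fact (Suc r)"
      by (simp only: fact_Suc power_Suc) (simp add: algebra_simps)
    finally show ?thesis using True by simp
  next
    case False
    then have "k + 1 \<noteq> -1 - int r" by simp
    then show ?thesis using False by (simp add: Suc.IH)
  qed
  finally show ?case .
qed

definition fls_regular :: "complex fls \<Rightarrow> bool" where
  "fls_regular a \<longleftrightarrow> (\<forall>k<0. a $$ k = 0)"

lemma fls_regular_deriv: "fls_regular a \<Longrightarrow> fls_regular (fls_deriv a)"
  unfolding fls_regular_def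
proof (intro allI impI)
  fix k :: int assume "\<forall>k<0. a $$ k = 0" and "k < 0"
  then show "fls_deriv a $$ k = 0" by (cases "k = -1") simp_all
qed

lemma fls_regular_funpow_deriv: "fls_regular a \<Longrightarrow> fls_regular ((fls_deriv ^^ r) a)"
  by (induction r) (auto intro: fls_regular_deriv)

lemma fls_regular_const_mult: "fls_regular a \<Longrightarrow> fls_regular (fls_const c * a)"
  by (simp add: fls_regular_def)

lemma neg_int_cases:
  fixes n :: int
  assumes "n < 0"
  obtains r where "n = - int r - 1"
proof -
  have "n = - int (nat (-n-1)) - 1" using assms by simp
  then show ?thesis using that by blast
qed

lemma of_nat_Suc_mult_inverse_fact: "of_nat (Suc r) * (1 / (fact (Suc r) :: complex)) = 1 / fact r"
  by (simp add: field_simps del: of_nat_Suc)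

lemma U_prod_nonneg [simp]: "n \<ge> 0 \<Longrightarrow> U_prod n a b = 0"
  by (simp add: U_prod_def)

lemma U_prod_neg: "U_prod (- int r - 1) a b = fls_const (1 / fact r) * (fls_deriv ^^ r) a * b"
proof -
  have "nat (- (- int r - 1) - 1) = r" by simp
  then show ?thesis by (simp add: U_prod_def)
qed

lemma U_prod_add_left: "U_prod n (a + a') b = U_prod n a b + U_prod n a' b"
  by (simp add: U_prod_def funpow_fls_deriv_add algebra_simps)

lemma U_prod_add_right: "U_prod n a (b + b') = U_prod n a b + U_prod n a b'"
  by (simp add: U_prod_def algebra_simps)

lemma U_prod_const_mult_left: "U_prod n (fls_const c * a) b = fls_const c * U_prod n a b"
  unfolding U_prod_def funpow_fls_deriv_const_mult by (simp add: ac_simps)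

lemma U_prod_const_mult_right: "U_prod n a (fls_const c * b) = fls_const c * U_prod n a b"
  by (simp add: U_prod_def algebra_simps)

lemma U_prod_zero_left [simp]: "U_prod n 0 b = 0"
  by (simp add: U_prod_def funpow_fls_deriv_zero)

lemma U_prod_zero_right [simp]: "U_prod n a 0 = 0"
  by (simp add: U_prod_def)

lemma U_prod_commute: "U_prod m u (U_prod n v w) = U_prod n v (U_prod m u w)"
  by (simp add: U_prod_def algebra_simps)

lemma U_prod_one_left: "U_prod n 1 v = (if n = -1 then v else 0)"
proof (cases "n \<ge> 0")
  case False
  then obtain r where n: "n = - int r - 1" using neg_int_cases by (metis not_le)
  show ?thesis
  proof (cases r)
    case 0 then show ?thesis using n U_prod_neg[of 0 1 v] by simp
  next
    case (Suc r') then show ?thesis using n by (simp only: U_prod_neg funpow_fls_deriv_one) simp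
  qed
qed simp

lemma U_prod_one_right: "U_prod (-1) u 1 = u"
  using U_prod_neg[of 0 u 1] by simp

lemma U_prod_deriv_left:
  "U_prod n (fls_deriv u) v = fls_const (- of_int n) * U_prod (n - 1) u v"
proof (cases "n \<ge> 0")
  case True
  then show ?thesis by (cases "n = 0") auto
next
  case False
  then obtain r where n: "n = - int r - 1" using neg_int_cases by (metis not_le)
  have "U_prod n (fls_deriv u) v = fls_const (1 / fact r) * (fls_deriv ^^ Suc r) u * v"
    unfolding n U_prod_neg by (simp only: funpow_fls_deriv_Suc)
  also have "\<dots> = fls_const (of_nat (Suc r) * (1 / fact (Suc r))) * (fls_deriv ^^ Suc r) u * v"
    by (simp only: of_nat_Suc_mult_inverse_fact)
  also have "\<dots> = fls_const (- of_int n) * U_prod (n - 1) u v"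
  proof -
    have "- of_int n = (of_nat (Suc r) :: complex)" and n1: "n - 1 = - int (Suc r) - 1"
      using n by simp_all
    then show ?thesis unfolding n1 U_prod_neg
      by (simp only: fls_const_mult_const[symmetric] mult.assoc)
  qed
  finally show ?thesis .
qed

lemma U_prod_deriv:
  "fls_deriv (U_prod n u v) = U_prod n (fls_deriv u) v + U_prod n u (fls_deriv v)"
  by (simp add: U_prod_def funpow_fls_deriv_Suc[symmetric] algebra_simps)

lemma U_prod_translation:
  "fls_deriv (U_prod n u v) - U_prod n u (fls_deriv v) = fls_const (- of_int n) * U_prod (n - 1) u v"
  by (simp add: U_prod_deriv U_prod_deriv_left)

section \<open>Products of U with N\<close>

lemma pCons_0_sum: "pCons 0 (\<Sum>x\<in>S. f x) = (\<Sum>x\<in>S. pCons 0 (f x))"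
proof (induction S rule: infinite_finite_induct)
  case (insert x F)
  have "pCons 0 (f x + sum f F) = pCons 0 (f x) + pCons 0 (sum f F)" by simp
  with insert show ?case by simp
qed simp_all

lemma smult_sum_right: "smult c (\<Sum>x\<in>S. f x) = (\<Sum>x\<in>S. smult c (f x))"
  by (induction S rule: infinite_finite_induct) (auto simp: smult_add_right)

lemma gchoose_mult_fact_Suc:
  "((a :: 'a :: field_char_0) gchoose Suc l) * fact (Suc l) = a * (((a - 1) gchoose l) * fact l)"
  using gbinomial_absorption[of l a] by (simp add: algebra_simps del: of_nat_Suc)

text \<open>A polynomial p stands for p(d) n \<in> N. UN_prod_mono j m u is u_(m) (d^j n), determined by
  u_(m) n = u_{-m-1} n and translation covariance u_(m) (d x) = d (u_(m) x) + m u_(m-1) x.\<close>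
primrec UN_prod_mono :: "nat \<Rightarrow> int \<Rightarrow> complex fls \<Rightarrow> complex poly" where
  "UN_prod_mono 0 m u = [:u $$ (-m-1):]"
| "UN_prod_mono (Suc j) m u = pCons 0 (UN_prod_mono j m u) + smult (of_int m) (UN_prod_mono j (m-1) u)"

lemma UN_prod_mono_add: "UN_prod_mono j m (u + v) = UN_prod_mono j m u + UN_prod_mono j m v"
  by (induction j arbitrary: m) (simp_all add: algebra_simps smult_add_right)

lemma UN_prod_mono_const_mult: "UN_prod_mono j m (fls_const c * u) = smult c (UN_prod_mono j m u)"
  by (induction j arbitrary: m) (simp_all add: algebra_simps smult_add_right)

lemma UN_prod_mono_deriv:
  "UN_prod_mono j m (fls_deriv u) = smult (- of_int m) (UN_prod_mono j (m-1) u)"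
proof (induction j arbitrary: m)
  case 0
  have "-(m-1)-1 = -m" by simp
  then show ?case by simp
next
  case (Suc j)
  show ?case by (simp add: Suc algebra_simps smult_add_right)
qed

lemma UN_prod_mono_one: "UN_prod_mono j m 1 = (if m = -1 then monom 1 j else 0)"
  by (induction j arbitrary: m) (simp_all add: monom_0 monom_Suc)

lemma UN_prod_mono_vanish: "m \<ge> - fls_subdegree u + int j \<Longrightarrow> UN_prod_mono j m u = 0"
  by (induction j arbitrary: m) simp_all

lemma UN_prod_mono_coeff:
  "coeff (UN_prod_mono j m u) i = (if i \<le> j then
     of_nat (j choose i) * ((of_int m gchoose (j - i)) * fact (j - i)) * u $$ (int j - int i - m - 1)
   else 0)"
proof (induction j arbitrary: m i)
  case 0 then show ?case by (cases i) simp_all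
next
  case (Suc j)
  show ?case
  proof (cases i)
    case 0
    have "coeff (UN_prod_mono (Suc j) m u) i = of_int m * coeff (UN_prod_mono j (m-1) u) 0"
      using 0 by simp
    also have "\<dots> = of_int m * ((of_int m - 1 gchoose j) * fact j) * u $$ (int j - m)"
      by (simp add: Suc)
    also have "\<dots> = ((of_int m gchoose Suc j) * fact (Suc j)) * u $$ (int j - m)"
      by (simp only: gchoose_mult_fact_Suc)
    finally show ?thesis using 0 by simp
  next
    case (Suc i')
    have e: "coeff (UN_prod_mono (Suc j) m u) i
        = coeff (UN_prod_mono j m u) i' + of_int m * coeff (UN_prod_mono j (m-1) u) (Suc i')"
      using Suc by simp
    consider "j < i'" | "i' = j" | "Suc i' \<le> j" by linarith
    then show ?thesis
    proof cases
      case 3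
      then obtain d where d: "j - i' = Suc d" "j - Suc i' = d"
        by (metis Suc_diff_Suc Suc_le_lessD)
      define x where "x = u $$ (int j - int i' - m - 1)"
      have idx: "int j - int (Suc i') - (m - 1) - 1 = int j - int i' - m - 1" by simp
      have "coeff (UN_prod_mono (Suc j) m u) i
          = of_nat (j choose i') * ((of_int m gchoose Suc d) * fact (Suc d)) * x
            + of_nat (j choose Suc i') * (of_int m * ((of_int m - 1 gchoose d) * fact d)) * x"
        using e 3 d by (simp add: Suc.IH idx x_def algebra_simps)
      also have "\<dots> = of_nat (Suc j choose Suc i') * ((of_int m gchoose Suc d) * fact (Suc d)) * x"
        by (simp only: gchoose_mult_fact_Suc[symmetric] binomial_Suc_Suc) (simp add: algebra_simps)
      finally show ?thesis using Suc 3 d by (simp add: x_def)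
    qed (use e Suc in \<open>simp_all add: Suc.IH\<close>)
  qed
qed

definition UN_prod :: "int \<Rightarrow> complex fls \<Rightarrow> complex poly \<Rightarrow> complex poly" where
  "UN_prod m u q = (\<Sum>j\<le>degree q. smult (coeff q j) (UN_prod_mono j m u))"

lemma UN_prod_eq_sum_atMost:
  assumes "degree q \<le> M"
  shows "UN_prod m u q = (\<Sum>j\<le>M. smult (coeff q j) (UN_prod_mono j m u))"
  unfolding UN_prod_def
  by (rule sum.mono_neutral_left) (use assms in \<open>auto simp: coeff_eq_0\<close>)

lemma UN_prod_add_right: "UN_prod m u (p + q) = UN_prod m u p + UN_prod m u q"
proof -
  define M where "M = max (degree p) (degree q)"
  have "degree (p + q) \<le> M" "degree p \<le> M" "degree q \<le> M"
    by (auto simp: M_def degree_add_le)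
  then show ?thesis
    by (simp add: UN_prod_eq_sum_atMost[of _ M] smult_add_left sum.distrib)
qed

lemma UN_prod_diff_right: "UN_prod m u (p - q) = UN_prod m u p - UN_prod m u q"
  using UN_prod_add_right[of m u "p - q" q] by (simp add: algebra_simps)

lemma UN_prod_smult_right: "UN_prod m u (smult c q) = smult c (UN_prod m u q)"
  using degree_smult_le[of c q]
  by (simp add: UN_prod_eq_sum_atMost[of _ "degree q"] UN_prod_def smult_sum_right)

lemma UN_prod_zero_right [simp]: "UN_prod m u 0 = 0"
  by (simp add: UN_prod_def)

lemma UN_prod_pCons:
  "UN_prod m u (pCons a q)
     = smult a [:u $$ (-m-1):] + pCons 0 (UN_prod m u q) + smult (of_int m) (UN_prod (m-1) u q)"
proof -
  have "UN_prod m u (pCons a q)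
      = (\<Sum>j\<le>Suc (degree q). smult (coeff (pCons a q) j) (UN_prod_mono j m u))"
    using degree_pCons_le by (rule UN_prod_eq_sum_atMost)
  also have "\<dots> = smult a [:u $$ (-m-1):]
      + (\<Sum>j\<le>degree q. smult (coeff q j) (UN_prod_mono (Suc j) m u))"
    by (subst sum.atMost_Suc_shift) simp
  also have "\<dots> = smult a [:u $$ (-m-1):] + pCons 0 (UN_prod m u q) + smult (of_int m) (UN_prod (m-1) u q)"
    by (simp add: UN_prod_def pCons_0_sum smult_sum_right sum.distrib smult_add_right algebra_simps)
  finally show ?thesis .
qed

lemma UN_prod_const: "UN_prod m u [:a:] = [:a * u $$ (-m-1):]"
  by (simp add: UN_prod_pCons)

lemma UN_prod_add_left: "UN_prod m (u + v) q = UN_prod m u q + UN_prod m v q"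
  by (simp add: UN_prod_def UN_prod_mono_add smult_add_right sum.distrib)

lemma UN_prod_const_mult_left: "UN_prod m (fls_const c * u) q = smult c (UN_prod m u q)"
  unfolding UN_prod_def UN_prod_mono_const_mult by (simp add: smult_sum_right mult.commute)

lemma UN_prod_zero_left [simp]: "UN_prod m 0 q = 0"
  using UN_prod_const_mult_left[of m 0 0 q] by simp

lemma UN_prod_deriv_left: "UN_prod m (fls_deriv u) q = smult (- of_int m) (UN_prod (m-1) u q)"
  by (simp add: UN_prod_def UN_prod_mono_deriv smult_sum_right mult.commute)

lemma UN_prod_one_left: "UN_prod m 1 q = (if m = -1 then q else 0)"
proof -
  have "(\<Sum>j\<le>degree q. smult (coeff q j) (monom 1 j)) = q"
    by (subst (2) poly_as_sum_of_monoms[symmetric]) (simp add: smult_monom)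
  then show ?thesis by (simp add: UN_prod_def UN_prod_mono_one)
qed

lemma UN_prod_vanish: "m \<ge> - fls_subdegree u + int (degree q) \<Longrightarrow> UN_prod m u q = 0"
  unfolding UN_prod_def by (rule sum.neutral) (auto intro!: UN_prod_mono_vanish)

lemma coeff_UN_prod:
  "degree q \<le> M \<Longrightarrow> coeff (UN_prod m u q) i = (\<Sum>j\<le>M. coeff q j * coeff (UN_prod_mono j m u) i)"
  by (simp add: UN_prod_eq_sum_atMost coeff_sum)

lemma UN_prod_commute: "UN_prod m u (UN_prod n v r) = UN_prod n v (UN_prod m u r)"
proof (induction r arbitrary: m n)
  case (pCons a r)
  show ?case
    by (simp add: UN_prod_pCons UN_prod_add_right UN_prod_smult_right UN_prod_const pCons.IH
        smult_add_right algebra_simps)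
qed simp

section \<open>Products of N with U\<close>

lemma minus_one_power_int_diff_nat: "(-1::complex) powi (e - int l) = (-1) ^ l * ((-1) powi e)"
  by (simp add: power_int_diff power_int_minus_left)

lemma minus_one_power_int_diff_one: "(-1::complex) powi (e - 1) = - ((-1) powi e)"
  by (simp add: power_int_diff)

text \<open>n_(m) v, read off from skew-symmetry:
  n_(m) v = sum over i of (-1)^(m+i+1) d^i/i! (v_(m+i) n), with
  v_(k) n = v_{-k-1} n.\<close>
definition NU_prod_gen :: "int \<Rightarrow> complex fls \<Rightarrow> complex poly" where
  "NU_prod_gen m v = (\<Sum>i<nat (-m - fls_subdegree v).
     monom ((-1) powi (-m-1-int i) * v $$ (-m-1-int i) / fact i) i)"

lemma coeff_NU_prod_gen:
  "coeff (NU_prod_gen m v) i = (-1) powi (-m-1-int i) * v $$ (-m-1-int i) / fact i"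
proof -
  have "coeff (NU_prod_gen m v) i = (if i < nat (-m - fls_subdegree v)
      then (-1) powi (-m-1-int i) * v $$ (-m-1-int i) / fact i else 0)"
    by (simp add: NU_prod_gen_def coeff_sum if_distrib[of "\<lambda>x. x * _"] sum.delta cong: if_cong)
  moreover have "v $$ (-m-1-int i) = 0" if "\<not> i < nat (-m - fls_subdegree v)"
    using that by simp
  ultimately show ?thesis by auto
qed

lemma NU_prod_gen_add: "NU_prod_gen m (v + w) = NU_prod_gen m v + NU_prod_gen m w"
  by (simp add: poly_eq_iff coeff_NU_prod_gen add_divide_distrib distrib_left)

lemma NU_prod_gen_const_mult: "NU_prod_gen m (fls_const c * v) = smult c (NU_prod_gen m v)"
  by (simp add: poly_eq_iff coeff_NU_prod_gen)

lemma NU_prod_gen_zero [simp]: "NU_prod_gen m 0 = 0"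
  by (simp add: poly_eq_iff coeff_NU_prod_gen)

lemma NU_prod_gen_vanish: "m \<ge> - fls_subdegree v \<Longrightarrow> NU_prod_gen m v = 0"
  by (simp add: NU_prod_gen_def)

lemma NU_prod_gen_one_nonneg: "m \<ge> 0 \<Longrightarrow> NU_prod_gen m 1 = 0"
  by (simp add: poly_eq_iff coeff_NU_prod_gen)

lemma NU_prod_gen_one_neg: "NU_prod_gen (- int k - 1) 1 = monom (1 / fact k) k"
proof -
  have "\<And>i. - (- int k - 1) - 1 - int i = int k - int i" by simp
  then show ?thesis by (auto simp add: poly_eq_iff coeff_NU_prod_gen)
qed

lemma NU_prod_gen_translation:
  "pCons 0 (NU_prod_gen m v) - NU_prod_gen m (fls_deriv v) = smult (- of_int m) (NU_prod_gen (m-1) v)"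
proof (rule poly_eqI)
  fix i
  show "coeff (pCons 0 (NU_prod_gen m v) - NU_prod_gen m (fls_deriv v)) i
      = coeff (smult (- of_int m) (NU_prod_gen (m-1) v)) i"
  proof (cases i)
    case 0
    have "-m-1+1 = -m" "-(m-1)-1 = -m" by simp_all
    then show ?thesis using 0 minus_one_power_int_diff_one[of "-m"]
      by (simp add: coeff_NU_prod_gen)
  next
    case (Suc i')
    define e where "e = -m-1-int i'"
    have i1: "-m-1-int (Suc i') = e - 1" "-(m-1)-1-int (Suc i') = e" "e - 1 + 1 = e"
      "- m - int (Suc i') = e" by (simp_all add: e_def)
    have em: "of_int e = - of_int m - 1 - (of_nat i' :: complex)" by (simp add: e_def)
    have f: "(fact (Suc i') :: complex) = of_nat (Suc i') * fact i'" by (simp only: fact_Suc)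
    have nz: "(of_nat (Suc i') :: complex) \<noteq> 0" by (simp only: of_nat_eq_0_iff)
    have "coeff (pCons 0 (NU_prod_gen m v) - NU_prod_gen m (fls_deriv v)) i
        = (-1) powi e * v $$ e / fact i'
          + (-1) powi e * (of_int e * v $$ e) / (of_nat (Suc i') * fact i')"
      using Suc by (simp add: coeff_NU_prod_gen i1 minus_one_power_int_diff_one e_def[symmetric] f
          del: of_nat_Suc)
    also have "\<dots> = - of_int m * ((-1) powi e * v $$ e / (of_nat (Suc i') * fact i'))"
      using nz unfolding em by (simp add: field_simps del: of_nat_Suc) (simp add: algebra_simps)
    also have "\<dots> = coeff (smult (- of_int m) (NU_prod_gen (m-1) v)) i"
      using Suc by (simp add: coeff_NU_prod_gen i1 f del: of_nat_Suc)
    finally show ?thesis .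
  qed
qed

text \<open>NU_prod_mono j m v is (d^j n)_(m) v, using (d a)_(m) = -m a_(m-1).\<close>
primrec NU_prod_mono :: "nat \<Rightarrow> int \<Rightarrow> complex fls \<Rightarrow> complex poly" where
  "NU_prod_mono 0 m v = NU_prod_gen m v"
| "NU_prod_mono (Suc j) m v = smult (- of_int m) (NU_prod_mono j (m-1) v)"

lemma NU_prod_mono_add: "NU_prod_mono j m (v + w) = NU_prod_mono j m v + NU_prod_mono j m w"
  by (induction j arbitrary: m) (simp_all add: NU_prod_gen_add smult_add_right)

lemma NU_prod_mono_const_mult: "NU_prod_mono j m (fls_const c * v) = smult c (NU_prod_mono j m v)"
  by (induction j arbitrary: m)
    (simp_all only: NU_prod_mono.simps NU_prod_gen_const_mult smult_smult, simp add: mult.commute)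

lemma NU_prod_mono_vanish: "m \<ge> - fls_subdegree v + int j \<Longrightarrow> NU_prod_mono j m v = 0"
  by (induction j arbitrary: m) (simp_all add: NU_prod_gen_vanish)

lemma NU_prod_mono_one_nonneg: "m \<ge> 0 \<Longrightarrow> NU_prod_mono j m 1 = 0"
proof (induction j arbitrary: m)
  case 0 then show ?case by (simp add: NU_prod_gen_one_nonneg)
next
  case (Suc j)
  then show ?case by (cases "m = 0") simp_all
qed

lemma NU_prod_mono_one_neg: "NU_prod_mono j (- int k - 1) 1 = monom (1 / fact k) (j + k)"
proof (induction j arbitrary: k)
  case 0 then show ?case by (simp add: NU_prod_gen_one_neg)
next
  case (Suc j)
  have e: "- int k - 1 - 1 = - int (Suc k) - 1" by simp
  have f: "(fact (Suc k) :: complex) = of_nat (Suc k) * fact k" by (simp only: fact_Suc)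
  have nz: "(of_nat (Suc k) :: complex) \<noteq> 0" by (simp only: of_nat_eq_0_iff)
  have "- of_int (- int k - 1) = (of_nat (Suc k) :: complex)" by simp
  then show ?case using nz
    by (simp only: NU_prod_mono.simps e Suc.IH smult_monom f) (simp add: field_simps del: of_nat_Suc)
qed

lemma NU_prod_mono_translation:
  "pCons 0 (NU_prod_mono j m v) - NU_prod_mono j m (fls_deriv v) = smult (- of_int m) (NU_prod_mono j (m-1) v)"
proof (induction j arbitrary: m)
  case 0 then show ?case by (simp add: NU_prod_gen_translation)
next
  case (Suc j)
  have "pCons 0 (NU_prod_mono (Suc j) m v) - NU_prod_mono (Suc j) m (fls_deriv v)
      = smult (- of_int m) (pCons 0 (NU_prod_mono j (m-1) v) - NU_prod_mono j (m-1) (fls_deriv v))"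
    by (simp add: smult_diff_right)
  also have "\<dots> = smult (- of_int m) (smult (- of_int (m-1)) (NU_prod_mono j (m-1-1) v))"
    by (simp only: Suc.IH)
  finally show ?case by simp
qed

definition NU_prod :: "int \<Rightarrow> complex poly \<Rightarrow> complex fls \<Rightarrow> complex poly" where
  "NU_prod m p v = (\<Sum>j\<le>degree p. smult (coeff p j) (NU_prod_mono j m v))"

lemma NU_prod_eq_sum_atMost:
  assumes "degree p \<le> M"
  shows "NU_prod m p v = (\<Sum>j\<le>M. smult (coeff p j) (NU_prod_mono j m v))"
  unfolding NU_prod_def
  by (rule sum.mono_neutral_left) (use assms in \<open>auto simp: coeff_eq_0\<close>)

lemma NU_prod_add_left: "NU_prod m (p + q) v = NU_prod m p v + NU_prod m q v"
proof -
  define M where "M = max (degree p) (degree q)"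
  have "degree (p + q) \<le> M" "degree p \<le> M" "degree q \<le> M"
    by (auto simp: M_def degree_add_le)
  then show ?thesis
    by (simp add: NU_prod_eq_sum_atMost[of _ M] smult_add_left sum.distrib)
qed

lemma NU_prod_smult_left: "NU_prod m (smult c p) v = smult c (NU_prod m p v)"
  using degree_smult_le[of c p]
  by (simp add: NU_prod_eq_sum_atMost[of _ "degree p"] NU_prod_def smult_sum_right)

lemma NU_prod_zero_left [simp]: "NU_prod m 0 v = 0"
  by (simp add: NU_prod_def)

lemma NU_prod_pCons:
  "NU_prod n (pCons a q) v = smult a (NU_prod_gen n v) + smult (- of_int n) (NU_prod (n-1) q v)"
proof -
  have "NU_prod n (pCons a q) v
      = (\<Sum>j\<le>Suc (degree q). smult (coeff (pCons a q) j) (NU_prod_mono j n v))"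
    using degree_pCons_le by (rule NU_prod_eq_sum_atMost)
  also have "\<dots> = smult a (NU_prod_gen n v)
      + (\<Sum>j\<le>degree q. smult (coeff q j) (NU_prod_mono (Suc j) n v))"
    by (subst sum.atMost_Suc_shift) simp
  also have "\<dots> = smult a (NU_prod_gen n v) + smult (- of_int n) (NU_prod (n-1) q v)"
    by (simp add: NU_prod_def smult_sum_right mult.commute)
  finally show ?thesis .
qed

lemma NU_prod_one_left: "NU_prod n 1 v = NU_prod_gen n v"
  using NU_prod_pCons[of n 1 0 v] by (simp add: one_pCons)

lemma NU_prod_add_right: "NU_prod m p (v + w) = NU_prod m p v + NU_prod m p w"
  by (simp add: NU_prod_def NU_prod_mono_add smult_add_right sum.distrib)

lemma NU_prod_diff_right: "NU_prod m p (v - w) = NU_prod m p v - NU_prod m p w"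
  using NU_prod_add_right[of m p "v - w" w] by (simp add: algebra_simps)

lemma NU_prod_zero_right [simp]: "NU_prod m p 0 = 0"
  using NU_prod_diff_right[of m p 0 0] by simp

lemma NU_prod_minus_right: "NU_prod m p (- v) = - NU_prod m p v"
  using NU_prod_diff_right[of m p 0 v] NU_prod_diff_right[of m p 0 0] by simp

lemma NU_prod_const_mult_right: "NU_prod m p (fls_const c * v) = smult c (NU_prod m p v)"
  unfolding NU_prod_def NU_prod_mono_const_mult by (simp add: smult_sum_right mult.commute)

lemma NU_prod_vanish: "m \<ge> - fls_subdegree v + int (degree p) \<Longrightarrow> NU_prod m p v = 0"
  unfolding NU_prod_def by (rule sum.neutral) (auto intro!: NU_prod_mono_vanish)

lemma NU_prod_translation:
  "pCons 0 (NU_prod n p v) - NU_prod n p (fls_deriv v) = smult (- of_int n) (NU_prod (n-1) p v)"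
proof -
  have "pCons 0 (NU_prod n p v) - NU_prod n p (fls_deriv v)
      = (\<Sum>j\<le>degree p. smult (coeff p j) (pCons 0 (NU_prod_mono j n v) - NU_prod_mono j n (fls_deriv v)))"
    by (simp add: NU_prod_def pCons_0_sum smult_diff_right sum_subtractf)
  also have "\<dots> = smult (- of_int n) (NU_prod (n-1) p v)"
    by (simp add: NU_prod_mono_translation NU_prod_def smult_sum_right mult.commute)
  finally show ?thesis .
qed

lemma NU_prod_one_right_nonneg: "m \<ge> 0 \<Longrightarrow> NU_prod m p 1 = 0"
  by (simp add: NU_prod_def NU_prod_mono_one_nonneg)

lemma NU_prod_minus_one_one_right: "NU_prod (-1) p 1 = p"
proof -
  have "NU_prod_mono j (-1) 1 = monom 1 j" for j
    using NU_prod_mono_one_neg[of j 0] by simp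
  then have "NU_prod (-1) p 1 = (\<Sum>j\<le>degree p. monom (coeff p j) j)"
    by (simp add: NU_prod_def smult_monom)
  then show ?thesis by (simp add: poly_as_sum_of_monoms)
qed

lemma V_smult_pair: "V_smult c (u, p) = (fls_const c * u, smult c p)"
  by (simp add: V_smult_def)

lemma V_smult_add_left: "V_smult (a + b) x = V_smult a x + V_smult b x"
  by (simp add: V_smult_def distrib_right smult_add_left fls_plus_const[symmetric])

lemma V_smult_one [simp]: "V_smult 1 x = x"
  by (simp add: V_smult_def)

lemma V_smult_smult: "V_smult a (V_smult b x) = V_smult (a * b) x"
  by (simp add: V_smult_def mult.assoc[symmetric] fls_const_mult_const)

lemma V_smult_diff_right: "V_smult c (x - y) = V_smult c x - V_smult c y"
  by (simp add: V_smult_def algebra_simps smult_diff_right)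

lemma V_T_smult: "V_T (V_smult c x) = V_smult c (V_T x)"
  by (simp add: V_T_def V_smult_def)

lemma N_pCons: "(0, pCons c q) = V_smult c V_n + V_T (0, q)"
  by (simp add: V_smult_def V_n_def V_T_def)

lemma fst_funpow_V_T_N: "fst ((V_T ^^ k) (0, p)) = 0"
  by (induction k) (simp_all add: V_T_def)

definition V_prod :: "int \<Rightarrow> V \<Rightarrow> V \<Rightarrow> V" where
  "V_prod m x y = (U_prod m (fst x) (fst y), UN_prod m (fst x) (snd y) + NU_prod m (snd x) (fst y))"

lemma V_prod_pair: "V_prod m (u, p) (v, q) = (U_prod m u v, UN_prod m u q + NU_prod m p v)"
  by (simp add: V_prod_def)

lemma V_prod_add_left: "V_prod n (a + b) c = V_prod n a c + V_prod n b c"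
  by (simp add: V_prod_def U_prod_add_left UN_prod_add_left NU_prod_add_left)

lemma V_prod_add_right: "V_prod n a (b + c) = V_prod n a b + V_prod n a c"
  by (simp add: V_prod_def U_prod_add_right UN_prod_add_right NU_prod_add_right)

lemma V_prod_smult_left: "V_prod n (V_smult k a) c = V_smult k (V_prod n a c)"
  by (simp add: V_prod_def V_smult_def U_prod_const_mult_left UN_prod_const_mult_left
      NU_prod_smult_left smult_add_right)

lemma V_prod_smult_right: "V_prod n a (V_smult k c) = V_smult k (V_prod n a c)"
  by (simp add: V_prod_def V_smult_def U_prod_const_mult_right UN_prod_smult_right
      NU_prod_const_mult_right smult_add_right)

lemma V_prod_eventually_zero: "\<exists>N. \<forall>n\<ge>N. V_prod n a b = 0"
proof -
  obtain u p v q where ab: "a = (u, p)" "b = (v, q)" by fastforce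
  define N where "N = max 0 (max (- fls_subdegree u + int (degree q)) (- fls_subdegree v + int (degree p)))"
  have "V_prod n a b = 0" if "n \<ge> N" for n
    using that UN_prod_vanish[of u q n] NU_prod_vanish[of v p n]
    by (simp add: ab V_prod_pair N_def zero_prod_def)
  then show ?thesis by blast
qed

lemma V_prod_translation: "V_T (V_prod n a b) - V_prod n a (V_T b) = V_smult (- of_int n) (V_prod (n - 1) a b)"
proof -
  obtain u p v q where ab: "a = (u, p)" "b = (v, q)" by fastforce
  have "pCons 0 (UN_prod n u q + NU_prod n p v) - (UN_prod n u (pCons 0 q) + NU_prod n p (fls_deriv v))
      = (pCons 0 (NU_prod n p v) - NU_prod n p (fls_deriv v)) - smult (of_int n) (UN_prod (n-1) u q)"
    by (simp add: UN_prod_pCons)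
  also have "\<dots> = smult (- of_int n) (UN_prod (n-1) u q + NU_prod (n-1) p v)"
    by (simp add: NU_prod_translation smult_add_right)
  finally show ?thesis
    using U_prod_translation[of n u v] by (simp add: ab V_prod_pair V_T_def V_smult_pair)
qed

lemma V_prod_U_U: "V_prod n (a, 0) (b, 0) = (U_prod n a b, 0)"
  by (simp add: V_prod_pair)

lemma V_prod_n_n: "V_prod n V_n V_n = 0"
  by (simp add: V_n_def V_prod_pair zero_prod_def NU_prod_one_left)

lemma V_prod_U_n: "V_prod n (a, 0) V_n = (0, [:a $$ (- n - 1):])"
  using UN_prod_const[of n a 1] by (simp add: V_n_def V_prod_pair one_pCons)

lemma V_prod_vacuum_left: "V_prod n V_vac a = (if n = -1 then a else 0)"
  by (cases a) (simp add: V_vac_def V_prod_pair U_prod_one_left UN_prod_one_left zero_prod_def)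

lemma V_prod_vacuum_right_nonneg: "n \<ge> 0 \<Longrightarrow> V_prod n a V_vac = 0"
  by (cases a) (simp add: V_vac_def V_prod_pair NU_prod_one_right_nonneg zero_prod_def)

lemma V_prod_vacuum_right_minus_one: "V_prod (-1) a V_vac = a"
  by (cases a) (simp add: V_vac_def V_prod_pair NU_prod_minus_one_one_right U_prod_one_right)

lemma V_T_vacuum: "V_T V_vac = 0"
  by (simp add: V_T_def V_vac_def zero_prod_def)

section \<open>Locality of the products\<close>

lemma loc_sum_poly_Suc:
  "loc_sum smult (Suc N) K m n = loc_sum smult N K (m + 1) n - loc_sum smult N K m (n + 1)"
  by (rule loc_sum_Suc) (simp add: smult_add_left)

lemma loc_sum_poly_add:
  "loc_sum smult N (\<lambda>m n. K1 m n + K2 m n) m n = loc_sum smult N K1 m n + loc_sum smult N K2 m n"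
  by (simp add: loc_sum_def smult_add_right sum.distrib)

lemma loc_sum_poly_smult:
  "loc_sum smult N (\<lambda>m n. smult c (K m n)) m n = smult c (loc_sum smult N K m n)"
  by (simp add: loc_sum_def smult_sum_right mult.commute)

text \<open>(z - w)^(N+1) d/dz K = d/dz ((z - w)^(N+1) K) - (N + 1) (z - w)^N K, and similarly for w.\<close>
lemma loc_sum_poly_deriv_left:
  "loc_sum smult (Suc N) (\<lambda>m n. smult (- of_int m) (K (m-1) n)) m n
   = smult (- of_int m) (loc_sum smult (Suc N) K (m-1) n) - smult (of_nat (Suc N)) (loc_sum smult N K m n)"
proof (induction N arbitrary: m n)
  case 0
  show ?case by (simp add: loc_sum_poly_Suc loc_sum_0 poly_eq_iff) (simp add: algebra_simps)
next
  case (Suc N)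
  show ?case
    by (subst loc_sum_poly_Suc, simp only: Suc.IH, simp add: loc_sum_poly_Suc poly_eq_iff)
      (simp add: algebra_simps numeral_mult_conv_smult)
qed

lemma loc_sum_poly_deriv_right:
  "loc_sum smult (Suc N) (\<lambda>m n. smult (- of_int n) (K m (n-1))) m n
   = smult (- of_int n) (loc_sum smult (Suc N) K m (n-1)) + smult (of_nat (Suc N)) (loc_sum smult N K m n)"
proof (induction N arbitrary: m n)
  case 0
  show ?case by (simp add: loc_sum_poly_Suc loc_sum_0 poly_eq_iff) (simp add: algebra_simps)
next
  case (Suc N)
  show ?case
    by (subst loc_sum_poly_Suc, simp only: Suc.IH, simp add: loc_sum_poly_Suc poly_eq_iff)
      (simp add: algebra_simps numeral_mult_conv_smult)
qed

definition uniformly_local :: "(complex fls \<Rightarrow> int \<Rightarrow> int \<Rightarrow> complex poly) \<Rightarrow> bool" where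
  "uniformly_local K \<longleftrightarrow> (\<exists>N. \<forall>w m n. loc_sum smult N (K w) m n = 0)"

lemma uniformly_local_eventually:
  "uniformly_local K \<Longrightarrow> \<exists>N0. \<forall>N\<ge>N0. \<forall>w m n. loc_sum smult N (K w) m n = 0"
  unfolding uniformly_local_def by (metis loc_sum_eq_0_mono smult_add_left)

lemma uniformly_local_add:
  assumes "uniformly_local K1" "uniformly_local K2"
  shows "uniformly_local (\<lambda>w m n. K1 w m n + K2 w m n)"
proof -
  obtain N1 N2 where "\<forall>N\<ge>N1. \<forall>w m n. loc_sum smult N (K1 w) m n = 0"
    "\<forall>N\<ge>N2. \<forall>w m n. loc_sum smult N (K2 w) m n = 0"
    using assms uniformly_local_eventually by metis
  then have "\<forall>w m n. loc_sum smult (max N1 N2) (\<lambda>m n. K1 w m n + K2 w m n) m n = 0"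
    by (simp add: loc_sum_poly_add)
  then show ?thesis unfolding uniformly_local_def by blast
qed

lemma uniformly_local_smult: "uniformly_local K \<Longrightarrow> uniformly_local (\<lambda>w m n. smult c (K w m n))"
  unfolding uniformly_local_def by (auto simp: loc_sum_poly_smult)

lemma uniformly_local_zero: "(\<And>w m n. K w m n = 0) \<Longrightarrow> uniformly_local K"
  unfolding uniformly_local_def by (rule exI[of _ 0]) (simp add: loc_sum_0)

lemma uniformly_local_deriv_left:
  assumes "uniformly_local K"
  shows "uniformly_local (\<lambda>w m n. smult (- of_int m) (K w (m-1) n))"
proof -
  obtain N0 where "\<forall>N\<ge>N0. \<forall>w m n. loc_sum smult N (K w) m n = 0"
    using assms uniformly_local_eventually by metis
  then have "\<forall>w m n. loc_sum smult (Suc N0) (\<lambda>m n. smult (- of_int m) (K w (m-1) n)) m n = 0"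
    by (simp only: loc_sum_poly_deriv_left) simp
  then show ?thesis unfolding uniformly_local_def by blast
qed

lemma uniformly_local_deriv_right:
  assumes "uniformly_local K"
  shows "uniformly_local (\<lambda>w m n. smult (- of_int n) (K w m (n-1)))"
proof -
  obtain N0 where "\<forall>N\<ge>N0. \<forall>w m n. loc_sum smult N (K w) m n = 0"
    using assms uniformly_local_eventually by metis
  then have "\<forall>w m n. loc_sum smult (Suc N0) (\<lambda>m n. smult (- of_int n) (K w m (n-1))) m n = 0"
    by (simp only: loc_sum_poly_deriv_right) simp
  then show ?thesis unfolding uniformly_local_def by blast
qed

text \<open>The N-component of u_(m) ((q n)_(k) w) - (q n)_(k) (u_(m) w); all other commutators of
  the product vanish identically.\<close>
definition comm_UN :: "complex fls \<Rightarrow> complex poly \<Rightarrow> complex fls \<Rightarrow> int \<Rightarrow> int \<Rightarrow> complex poly" where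
  "comm_UN u q w m k = UN_prod m u (NU_prod k q w) - NU_prod k q (U_prod m u w)"

lemma comm_UN_add: "comm_UN (u1 + u2) q = (\<lambda>w m n. comm_UN u1 q w m n + comm_UN u2 q w m n)"
  by (intro ext) (simp add: comm_UN_def UN_prod_add_left U_prod_add_left NU_prod_add_right)

lemma comm_UN_const_mult: "comm_UN (fls_const c * u) q = (\<lambda>w m n. smult c (comm_UN u q w m n))"
  by (intro ext)
    (simp add: comm_UN_def UN_prod_const_mult_left U_prod_const_mult_left NU_prod_const_mult_right
      smult_diff_right)

lemma comm_UN_deriv:
  "comm_UN (fls_deriv u) q = (\<lambda>w m n. smult (- of_int m) (comm_UN u q w (m-1) n))"
  by (intro ext)
    (simp add: comm_UN_def UN_prod_deriv_left U_prod_deriv_left NU_prod_const_mult_right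
      NU_prod_minus_right smult_diff_right)

lemma comm_UN_pCons:
  "comm_UN u (pCons a q) = (\<lambda>w m n. smult a (comm_UN u 1 w m n) + smult (- of_int n) (comm_UN u q w m (n-1)))"
  by (intro ext)
    (simp add: comm_UN_def NU_prod_pCons UN_prod_add_right UN_prod_diff_right UN_prod_smult_right
      NU_prod_one_left smult_diff_right)

lemma fls_times_nth_sum_superset:
  fixes f g :: "'a::comm_ring_1 fls"
  assumes "finite I" and "\<And>i. i \<notin> I \<Longrightarrow> f $$ i * g $$ (n - i) = 0"
  shows "(f * g) $$ n = (\<Sum>i\<in>I. f $$ i * g $$ (n - i))"
proof -
  define J where "J = {fls_subdegree f..n - fls_subdegree g}"
  have "(f * g) $$ n = (\<Sum>i\<in>J. f $$ i * g $$ (n - i))"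
    by (simp add: fls_times_nth(2) J_def)
  also have "\<dots> = (\<Sum>i\<in>I \<union> J. f $$ i * g $$ (n - i))"
  proof (rule sum.mono_neutral_left)
    show "\<forall>i\<in>I \<union> J - J. f $$ i * g $$ (n - i) = 0"
    proof
      fix i assume "i \<in> I \<union> J - J"
      then have "i < fls_subdegree f \<or> n - i < fls_subdegree g" by (auto simp: J_def)
      then show "f $$ i * g $$ (n - i) = 0" by auto
    qed
  qed (use assms(1) in \<open>auto simp: J_def\<close>)
  also have "\<dots> = (\<Sum>i\<in>I. f $$ i * g $$ (n - i))"
    by (rule sum.mono_neutral_right) (use assms in \<open>auto simp: J_def\<close>)
  finally show ?thesis .
qed

lemma fls_regular_times_nth:
  assumes "fls_regular f" and "\<And>l. l > L \<Longrightarrow> g $$ (n - int l) = 0"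
  shows "(f * g) $$ n = (\<Sum>l\<le>L. f $$ int l * g $$ (n - int l))"
proof -
  have "(f * g) $$ n = (\<Sum>i\<in>int ` {..L}. f $$ i * g $$ (n - i))"
  proof (rule fls_times_nth_sum_superset)
    fix i assume i: "i \<notin> int ` {..L}"
    show "f $$ i * g $$ (n - i) = 0"
    proof (cases "i < 0")
      case False
      with i have "nat i > L" by (metis atMost_iff image_eqI int_nat_eq not_le)
      then show ?thesis using assms(2)[of "nat i"] False by simp
    qed (use assms(1) in \<open>simp add: fls_regular_def\<close>)
  qed simp
  also have "\<dots> = (\<Sum>l\<le>L. f $$ int l * g $$ (n - int l))"
    by (simp add: sum.reindex)
  finally show ?thesis .
qed

lemma UN_prod_mono_regular_nonneg: "fls_regular u \<Longrightarrow> m \<ge> 0 \<Longrightarrow> UN_prod_mono j m u = 0"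
proof (induction j arbitrary: m)
  case 0 then show ?case by (simp add: fls_regular_def)
next
  case (Suc j) then show ?case by (cases "m = 0") simp_all
qed

lemma UN_prod_regular_nonneg: "fls_regular u \<Longrightarrow> m \<ge> 0 \<Longrightarrow> UN_prod m u p = 0"
  by (simp add: UN_prod_def UN_prod_mono_regular_nonneg)

lemma UN_prod_funpow_deriv:
  "UN_prod (-1) ((fls_deriv ^^ r) u) p = smult (fact r) (UN_prod (- int r - 1) u p)"
proof (induction r arbitrary: u)
  case (Suc r)
  have e: "- int r - 1 - 1 = - int (Suc r) - 1" by simp
  have c: "- of_int (- int r - 1) = (of_nat (Suc r) :: complex)" by simp
  have "UN_prod (-1) ((fls_deriv ^^ Suc r) u) p = smult (fact r) (UN_prod (- int r - 1) (fls_deriv u) p)"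
    by (simp only: funpow_fls_deriv_Suc Suc.IH)
  also have "\<dots> = smult (fact (Suc r)) (UN_prod (- int (Suc r) - 1) u p)"
    by (simp only: UN_prod_deriv_left e c smult_smult fact_Suc mult.commute)
  finally show ?case .
qed simp

lemma UN_prod_neg:
  "UN_prod (- int r - 1) u p = UN_prod (-1) (fls_const (1 / fact r) * (fls_deriv ^^ r) u) p"
  by (simp add: UN_prod_const_mult_left UN_prod_funpow_deriv)

lemma degree_NU_prod_gen: "degree (NU_prod_gen n w) \<le> nat (- n - fls_subdegree w)"
proof (rule degree_le, intro allI impI)
  fix i assume "nat (- n - fls_subdegree w) < i"
  then have "- n - 1 - int i < fls_subdegree w" by linarith
  then show "coeff (NU_prod_gen n w) i = 0" by (simp add: coeff_NU_prod_gen)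
qed

lemma coeff_UN_prod_minus_one:
  assumes "degree p \<le> i + M"
  shows "coeff (UN_prod (-1) u p) i
    = (\<Sum>l\<le>M. coeff p (l + i) * (of_nat ((l + i) choose i) * ((-1) ^ l * fact l)) * u $$ int l)"
proof -
  define f where "f j = coeff p j * coeff (UN_prod_mono j (-1) u) i" for j
  have "coeff (UN_prod (-1) u p) i = (\<Sum>j\<le>i + M. f j)"
    by (simp add: coeff_UN_prod[OF assms] f_def)
  also have "\<dots> = (\<Sum>j\<in>{i..i + M}. f j)"
    by (rule sum.mono_neutral_right) (auto simp: f_def UN_prod_mono_coeff)
  also have "\<dots> = (\<Sum>l\<le>M. f (l + i))"
    using sum.shift_bounds_cl_nat_ivl[of f 0 i M] by (simp add: add.commute atLeast0AtMost)
  also have "\<dots> = (\<Sum>l\<le>M. coeff p (l + i) * (of_nat ((l + i) choose i) * ((-1) ^ l * fact l)) * u $$ int l)"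
  proof (rule sum.cong[OF refl])
    fix l
    have "(-1 gchoose l) = ((-1) ^ l :: complex)"
      by (simp add: gbinomial_negated_upper[of "-1"] binomial_gbinomial[symmetric])
    then show "f (l + i) = coeff p (l + i) * (of_nat ((l + i) choose i) * ((-1) ^ l * fact l)) * u $$ int l"
      by (simp add: f_def UN_prod_mono_coeff)
  qed
  finally show ?thesis .
qed

text \<open>For a power series D, D_(-1) is multiplication by D and commutes with n_(k).\<close>
lemma UN_prod_minus_one_NU_prod_gen:
  assumes "fls_regular D"
  shows "UN_prod (-1) D (NU_prod_gen n w) = NU_prod_gen n (D * w)"
proof (rule poly_eqI)
  fix i
  define M where "M = nat (- n - fls_subdegree w)"
  define e where "e = - n - 1 - int i"
  have "coeff (UN_prod (-1) D (NU_prod_gen n w)) i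
      = (\<Sum>l\<le>M. coeff (NU_prod_gen n w) (l + i)
          * (of_nat ((l + i) choose i) * ((-1) ^ l * fact l)) * D $$ int l)"
    using degree_NU_prod_gen[of n w] by (intro coeff_UN_prod_minus_one) (simp add: M_def)
  also have "\<dots> = (\<Sum>l\<le>M. (-1) powi e / fact i * (D $$ int l * w $$ (e - int l)))"
  proof (rule sum.cong[OF refl])
    fix l
    have idx: "- n - 1 - int (l + i) = e - int l" by (simp add: e_def)
    have c: "coeff (NU_prod_gen n w) (l + i) = (-1) powi e * (-1) ^ l * w $$ (e - int l) / fact (l + i)"
      unfolding coeff_NU_prod_gen idx minus_one_power_int_diff_nat by simp
    have b: "(of_nat ((l + i) choose i) :: complex) = fact (l + i) / (fact i * fact l)"
      using binomial_fact[of i "l + i"] by simp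
    have s: "(-1::complex) ^ l * (-1) ^ l = 1"
      by (simp add: power_mult_distrib[symmetric])
    show "coeff (NU_prod_gen n w) (l + i) * (of_nat ((l + i) choose i) * ((-1) ^ l * fact l))
        * D $$ int l = (-1) powi e / fact i * (D $$ int l * w $$ (e - int l))"
      unfolding c b using s by (simp add: field_simps)
  qed
  also have "\<dots> = (-1) powi e / fact i * (D * w) $$ e"
  proof -
    have "w $$ (e - int l) = 0" if "l > M" for l
      using that by (simp add: M_def e_def)
    then have "(D * w) $$ e = (\<Sum>l\<le>M. D $$ int l * w $$ (e - int l))"
      by (rule fls_regular_times_nth[OF assms])
    then show ?thesis by (simp add: sum_distrib_left)
  qed
  also have "\<dots> = coeff (NU_prod_gen n (D * w)) i"
    by (simp add: coeff_NU_prod_gen e_def)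
  finally show "coeff (UN_prod (-1) D (NU_prod_gen n w)) i = coeff (NU_prod_gen n (D * w)) i" .
qed

lemma comm_UN_regular: "fls_regular u \<Longrightarrow> comm_UN u 1 w m n = 0"
proof (cases "m \<ge> 0")
  case True
  assume "fls_regular u"
  then show ?thesis using True by (simp add: comm_UN_def UN_prod_regular_nonneg)
next
  case False
  assume u: "fls_regular u"
  obtain r where m: "m = - int r - 1" using False neg_int_cases by (metis not_le)
  define D where "D = fls_const (1 / fact r) * (fls_deriv ^^ r) u"
  have "fls_regular D" unfolding D_def by (intro fls_regular_const_mult fls_regular_funpow_deriv u)
  moreover have "U_prod m u w = D * w" by (simp add: m U_prod_neg D_def)
  moreover have "UN_prod m u (NU_prod_gen n w) = UN_prod (-1) D (NU_prod_gen n w)"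
    by (simp add: m UN_prod_neg D_def)
  ultimately show ?thesis by (simp add: comm_UN_def NU_prod_one_left UN_prod_minus_one_NU_prod_gen)
qed

lemma fls_times_nth_single:
  fixes f g :: "'a::comm_ring_1 fls"
  assumes "\<And>k. k \<noteq> s \<Longrightarrow> f $$ k = 0"
  shows "(f * g) $$ e = f $$ s * g $$ (e - s)"
  using fls_times_nth_sum_superset[of "{s}" f g e] assms by simp

lemma U_prod_X_inv_nth: "U_prod (- int r - 1) fls_X_inv w $$ e = (-1) ^ r * w $$ (e + 1 + int r)"
proof -
  have "U_prod (- int r - 1) fls_X_inv w $$ e = (1 / fact r) * ((fls_deriv ^^ r) fls_X_inv * w) $$ e"
    by (simp add: U_prod_neg mult.assoc)
  also have "\<dots> = (-1) ^ r * w $$ (e - (-1 - int r))"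
    by (subst fls_times_nth_single[where s = "-1 - int r"]) (simp_all add: funpow_fls_deriv_X_inv_nth)
  also have "e - (-1 - int r) = e + 1 + int r" by simp
  finally show ?thesis .
qed

lemma coeff_UN_prod_X_inv:
  "coeff (UN_prod (int k) fls_X_inv p) i = coeff p (i + k) * (of_nat ((i + k) choose i) * fact k)"
proof -
  define M where "M = degree p + i + k"
  have "coeff (UN_prod (int k) fls_X_inv p) i = (\<Sum>j\<le>M. coeff p j * coeff (UN_prod_mono j (int k) fls_X_inv) i)"
    by (rule coeff_UN_prod) (simp add: M_def)
  also have "\<dots> = (\<Sum>j\<le>M. if j = i + k then coeff p (i + k) * (of_nat ((i + k) choose i) * fact k) else 0)"
  proof (rule sum.cong[OF refl])
    fix j
    have "(of_nat k gchoose k :: complex) = 1"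
      by (simp add: binomial_gbinomial[symmetric])
    moreover have "i \<le> j \<Longrightarrow> j \<noteq> i + k \<Longrightarrow> int j - int i - int k - 1 \<noteq> -1" by simp
    ultimately show "coeff p j * coeff (UN_prod_mono j (int k) fls_X_inv) i
        = (if j = i + k then coeff p (i + k) * (of_nat ((i + k) choose i) * fact k) else 0)"
      by (auto simp: UN_prod_mono_coeff)
  qed
  also have "\<dots> = coeff p (i + k) * (of_nat ((i + k) choose i) * fact k)"
    by (simp add: sum.delta M_def)
  finally show ?thesis .
qed

lemma UN_prod_X_inv_NU_prod_gen:
  "UN_prod (int k) fls_X_inv (NU_prod_gen n w) = NU_prod_gen (n + int k) w"
proof (rule poly_eqI)
  fix i
  have idx: "- n - 1 - int (i + k) = - (n + int k) - 1 - int i" by simp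
  have b: "(of_nat ((i + k) choose i) :: complex) = fact (i + k) / (fact i * fact k)"
    using binomial_fact[of i "i + k"] by simp
  show "coeff (UN_prod (int k) fls_X_inv (NU_prod_gen n w)) i = coeff (NU_prod_gen (n + int k) w) i"
    unfolding coeff_UN_prod_X_inv coeff_NU_prod_gen idx b by (simp add: field_simps)
qed

lemma NU_prod_gen_U_prod_X_inv:
  "NU_prod_gen n (U_prod (- int r - 1) fls_X_inv w) = - NU_prod_gen (n - int r - 1) w"
proof (rule poly_eqI)
  fix i
  define e where "e = - (n - int r - 1) - 1 - int i"
  have idx: "- n - 1 - int i + 1 + int r = e" by (simp add: e_def)
  have sg: "(-1) powi (- n - 1 - int i) = (-1) ^ Suc r * ((-1) powi e :: complex)"
  proof -
    have "- n - 1 - int i = e - int (Suc r)" by (simp add: e_def)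
    then show ?thesis by (simp only: minus_one_power_int_diff_nat)
  qed
  have s: "(-1::complex) ^ r * (-1) ^ r = 1"
    by (simp add: power_mult_distrib[symmetric])
  show "coeff (NU_prod_gen n (U_prod (- int r - 1) fls_X_inv w)) i = coeff (- NU_prod_gen (n - int r - 1) w) i"
    unfolding coeff_minus coeff_NU_prod_gen U_prod_X_inv_nth idx sg e_def[symmetric] using s
    by (simp add: algebra_simps)
qed

lemma comm_UN_X_inv: "comm_UN fls_X_inv 1 w m n = NU_prod_gen (n + m) w"
proof (cases "m \<ge> 0")
  case True
  then obtain k where "m = int k" using nonneg_int_cases by metis
  then show ?thesis by (simp add: comm_UN_def NU_prod_one_left UN_prod_X_inv_NU_prod_gen)
next
  case False
  then obtain r where m: "m = - int r - 1" using neg_int_cases by (metis not_le)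
  have "UN_prod_mono j m fls_X_inv = 0" for j
    using False by (intro poly_eqI) (auto simp: UN_prod_mono_coeff)
  then have "UN_prod m fls_X_inv p = 0" for p
    by (simp add: UN_prod_def)
  then show ?thesis
    by (simp add: comm_UN_def NU_prod_one_left m NU_prod_gen_U_prod_X_inv algebra_simps)
qed

lemma uniformly_local_comm_UN_X_inv: "uniformly_local (comm_UN fls_X_inv 1)"
  unfolding uniformly_local_def
proof (intro exI[of _ 1] allI)
  fix w and m n :: int
  show "loc_sum smult 1 (comm_UN fls_X_inv 1 w) m n = 0"
    using loc_sum_poly_Suc[of 0 "comm_UN fls_X_inv 1 w" m n]
    by (simp add: loc_sum_0 comm_UN_X_inv ac_simps)
qed

lemma uniformly_local_comm_UN_funpow_deriv_X_inv:
  "uniformly_local (comm_UN ((fls_deriv ^^ r) fls_X_inv) 1)"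
proof (induction r)
  case 0 then show ?case by (simp add: uniformly_local_comm_UN_X_inv)
next
  case (Suc r)
  then show ?case by (simp only: funpow.simps comp_def comm_UN_deriv uniformly_local_deriv_left)
qed

lemma fls_split_lowest_pole:
  fixes u :: "complex fls"
  assumes "\<forall>i < - int (Suc k). u $$ i = 0"
  obtains c u' where "u = u' + fls_const c * (fls_deriv ^^ k) fls_X_inv" and "\<forall>i < - int k. u' $$ i = 0"
proof
  define G where "G = (fls_deriv ^^ k) (fls_X_inv :: complex fls)"
  define c where "c = u $$ (-1 - int k) / ((-1) ^ k * fact k)"
  show "u = (u - fls_const c * G) + fls_const c * (fls_deriv ^^ k) fls_X_inv" by (simp add: G_def)
  have "(-1::complex) ^ k * fact k \<noteq> 0" by simp
  then show "\<forall>i < - int k. (u - fls_const c * G) $$ i = 0"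
    using assms by (auto simp: G_def c_def funpow_fls_deriv_X_inv_nth)
qed

lemma uniformly_local_comm_UN_one: "uniformly_local (comm_UN u 1)"
proof -
  have "\<forall>u. (\<forall>i < - int k. u $$ i = 0) \<longrightarrow> uniformly_local (comm_UN u 1)" for k
  proof (induction k)
    case 0
    show ?case
      using comm_UN_regular by (auto simp: fls_regular_def intro!: uniformly_local_zero)
  next
    case (Suc k)
    show ?case
    proof (intro allI impI)
      fix u :: "complex fls" assume "\<forall>i < - int (Suc k). u $$ i = 0"
      then obtain c u' where u: "u = u' + fls_const c * (fls_deriv ^^ k) fls_X_inv"
        and "\<forall>i < - int k. u' $$ i = 0"
        by (rule fls_split_lowest_pole)
      then have "uniformly_local (comm_UN u' 1)" using Suc.IH by blast
      then show "uniformly_local (comm_UN u 1)"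
        unfolding u comm_UN_add comm_UN_const_mult
        by (intro uniformly_local_add uniformly_local_smult uniformly_local_comm_UN_funpow_deriv_X_inv)
    qed
  qed
  moreover have "\<forall>i < - int (nat (- fls_subdegree u)). u $$ i = 0"
    by (auto intro: fls_eq0_below_subdegree)
  ultimately show ?thesis by blast
qed

lemma uniformly_local_comm_UN: "uniformly_local (comm_UN u q)"
proof (induction q)
  case 0
  show ?case by (intro uniformly_local_zero) (simp add: comm_UN_def)
next
  case (pCons a q)
  show ?case unfolding comm_UN_pCons
    by (intro uniformly_local_add uniformly_local_smult uniformly_local_comm_UN_one
        uniformly_local_deriv_right pCons.IH)
qed

lemma V_prod_commutator:
  "V_prod m (u, p) (V_prod k (v, q) (w, r)) - V_prod k (v, q) (V_prod m (u, p) (w, r))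
   = (0, comm_UN u q w m k - comm_UN v p w k m)"
  by (simp add: V_prod_def comm_UN_def U_prod_commute UN_prod_add_right UN_prod_commute algebra_simps)

text \<open>Exchanging z and w: (w - z)^N = (-1)^N (z - w)^N.\<close>
lemma loc_sum_poly_swap:
  "(\<Sum>j\<in>{0..N}. smult ((-1) ^ j * of_nat (N choose j)) (K (n + int j) (m + int N - int j)))
   = smult ((-1) ^ N) (loc_sum smult N K n m)"
proof -
  have "loc_sum smult N K n m
      = (\<Sum>j\<in>{0..N}. smult ((-1) ^ (N - j) * of_nat (N choose (N - j)))
          (K (n + int N - int (N - j)) (m + int (N - j))))"
    unfolding loc_sum_def by (subst sum.atLeastAtMost_rev) simp
  also have "\<dots> = (\<Sum>j\<in>{0..N}. smult ((-1) ^ N)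
      (smult ((-1) ^ j * of_nat (N choose j)) (K (n + int j) (m + int N - int j))))"
  proof (rule sum.cong[OF refl])
    fix j assume "j \<in> {0..N}"
    then have j: "j \<le> N" by simp
    have "(-1::complex) ^ (N - j) = (-1) ^ N * (-1) ^ j"
      using j by (simp add: power_diff_conv_inverse power_minus' divide_inverse)
    moreover have "N choose (N - j) = N choose j" using binomial_symmetric[OF j] by simp
    moreover have "n + int N - int (N - j) = n + int j" "m + int (N - j) = m + int N - int j"
      using j by simp_all
    ultimately show "smult ((-1) ^ (N - j) * of_nat (N choose (N - j))) (K (n + int N - int (N - j)) (m + int (N - j)))
        = smult ((-1) ^ N) (smult ((-1) ^ j * of_nat (N choose j)) (K (n + int j) (m + int N - int j)))"
      by (simp add: mult.assoc add_diff_eq)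
  qed
  finally have "smult ((-1) ^ N) (loc_sum smult N K n m) = smult ((-1) ^ N * (-1) ^ N)
      (\<Sum>j\<in>{0..N}. smult ((-1) ^ j * of_nat (N choose j)) (K (n + int j) (m + int N - int j)))"
    by (simp add: smult_sum_right)
  then show ?thesis by (simp add: power_mult_distrib[symmetric])
qed

lemma loc_sum_V_prod_commutator:
  "loc_sum V_smult N (\<lambda>m k. V_prod m (u, p) (V_prod k (v, q) c) - V_prod k (v, q) (V_prod m (u, p) c)) m k
   = (0, loc_sum smult N (comm_UN u q (fst c)) m k - smult ((-1) ^ N) (loc_sum smult N (comm_UN v p (fst c)) k m))"
proof -
  obtain w r where c: "c = (w, r)" by fastforce
  have "loc_sum V_smult N (\<lambda>m k. V_prod m (u, p) (V_prod k (v, q) c) - V_prod k (v, q) (V_prod m (u, p) c)) m k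
      = (\<Sum>j\<in>{0..N}. (0, smult ((-1) ^ j * of_nat (N choose j))
          (comm_UN u q w (m + int N - int j) (k + int j) - comm_UN v p w (k + int j) (m + int N - int j))))"
    by (simp add: loc_sum_def c V_prod_commutator V_smult_pair)
  also have "\<dots> = (0, loc_sum smult N (comm_UN u q w) m k - (\<Sum>j\<in>{0..N}. smult ((-1) ^ j * of_nat (N choose j))
          (comm_UN v p w (k + int j) (m + int N - int j))))"
    by (simp add: sum_prod smult_diff_right sum_subtractf loc_sum_def)
  finally show ?thesis by (simp only: loc_sum_poly_swap c fst_conv)
qed

lemma V_prod_locality:
  "\<exists>N. \<forall>m k c. loc_sum V_smult N (\<lambda>m k. V_prod m a (V_prod k b c) - V_prod k b (V_prod m a c)) m k = 0"
proof -
  obtain u p v q where ab: "a = (u, p)" "b = (v, q)" by fastforce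
  obtain N1 N2 where
    "\<forall>N\<ge>N1. \<forall>w m n. loc_sum smult N (comm_UN u q w) m n = 0"
    "\<forall>N\<ge>N2. \<forall>w m n. loc_sum smult N (comm_UN v p w) m n = 0"
    using uniformly_local_eventually[OF uniformly_local_comm_UN] by metis
  then have "loc_sum V_smult (max N1 N2)
      (\<lambda>m k. V_prod m a (V_prod k b c) - V_prod k b (V_prod m a c)) m k = 0" for m k c
    by (simp add: ab loc_sum_V_prod_commutator zero_prod_def)
  then show ?thesis by blast
qed

lemma vertex_algebra_V_prod: "vertex_algebra V_smult V_vac V_T V_prod"
  unfolding vertex_algebra_def
  using V_prod_add_left V_prod_add_right V_prod_smult_left V_prod_smult_right V_prod_eventually_zero
    V_T_vacuum V_prod_vacuum_left V_prod_vacuum_right_nonneg V_prod_vacuum_right_minus_one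
    V_prod_translation V_prod_locality[unfolded loc_sum_def]
  by blast

lemma V_structure_V_prod: "V_structure V_prod"
  unfolding V_structure_def by (simp add: vertex_algebra_V_prod V_prod_U_U V_prod_n_n V_prod_U_n)

locale complex_vertex_algebra =
  fixes sm :: "complex \<Rightarrow> 'v::ab_group_add \<Rightarrow> 'v" and vac :: 'v and T :: "'v \<Rightarrow> 'v"
    and Y :: "int \<Rightarrow> 'v \<Rightarrow> 'v \<Rightarrow> 'v"
  assumes vertex_algebra: "vertex_algebra sm vac T Y"
    and smult_add_left: "sm (a + b) x = sm a x + sm b x"
    and smult_one [simp]: "sm 1 x = x"
    and smult_smult: "sm a (sm b x) = sm (a * b) x"
    and smult_diff_right: "sm c (x - y) = sm c x - sm c y"
    and T_smult: "T (sm c x) = sm c (T x)"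
begin

lemma smult_zero_right [simp]: "sm c 0 = 0"
  using smult_diff_right[of c 0 0] by simp

lemma prod_add_left: "Y n (a + b) c = Y n a c + Y n b c"
  using vertex_algebra unfolding vertex_algebra_def by simp

lemma prod_add_right: "Y n a (b + c) = Y n a b + Y n a c"
  using vertex_algebra unfolding vertex_algebra_def by simp

lemma prod_smult_right: "Y n a (sm k c) = sm k (Y n a c)"
  using vertex_algebra unfolding vertex_algebra_def by blast

lemma prod_zero_right [simp]: "Y n a 0 = 0"
  using prod_add_right[of n a 0 0] by simp

lemma T_vacuum: "T vac = 0"
  using vertex_algebra unfolding vertex_algebra_def by blast

lemma vacuum_right_nonneg: "n \<ge> 0 \<Longrightarrow> Y n a vac = 0"
  using vertex_algebra unfolding vertex_algebra_def by blast

lemma vacuum_right_minus_one: "Y (-1) a vac = a"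
  using vertex_algebra unfolding vertex_algebra_def by blast

lemma translation: "T (Y n a b) - Y n a (T b) = sm (- of_int n) (Y (n - 1) a b)"
  using vertex_algebra unfolding vertex_algebra_def by blast

lemma prod_T_right: "Y n a (T b) = T (Y n a b) - sm (- of_int n) (Y (n - 1) a b)"
  using translation[of n a b] by (simp add: algebra_simps)

lemma locality:
  "\<exists>N. \<forall>m n c. loc_sum sm N (\<lambda>m n. Y m a (Y n b c) - Y n b (Y m a c)) m n = 0"
  using vertex_algebra unfolding vertex_algebra_def loc_sum_def by blast

lemma prod_vacuum_neg: "Y (- int k - 1) x vac = sm (1 / fact k) ((T ^^ k) x)"
proof (induction k)
  case 0 then show ?case using vacuum_right_minus_one by simp
next
  case (Suc k)
  have e: "- int k - 1 - 1 = - int (Suc k) - 1" by simp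
  have "sm (of_nat (Suc k)) (Y (- int (Suc k) - 1) x vac) = sm (1 / fact k) ((T ^^ Suc k) x)"
    using translation[of "- int k - 1" x vac] by (simp add: e T_vacuum Suc.IH T_smult)
  then have "sm (1 / of_nat (Suc k)) (sm (of_nat (Suc k)) (Y (- int (Suc k) - 1) x vac))
      = sm (1 / fact (Suc k)) ((T ^^ Suc k) x)"
    by (simp add: smult_smult fact_Suc del: of_nat_Suc)
  then show ?case by (simp add: smult_smult del: of_nat_Suc)
qed

text \<open>Locality of a and b applied to the vacuum, read at the coefficient where all but one term
  of the left-hand side vanish by the creation property.\<close>
lemma prod_eq_vacuum_sum:
  "\<exists>N0. \<forall>N\<ge>N0. \<forall>M. Y M x y = (\<Sum>j\<in>{0..N}. sm ((-1) ^ j * of_nat (N choose j))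
        (Y (-1 + int j) y (Y (M - int j) x vac)))"
proof -
  obtain N0 where N0: "\<forall>m n c. loc_sum sm N0 (\<lambda>m n. Y m x (Y n y c) - Y n y (Y m x c)) m n = 0"
    using locality by blast
  have "Y M x y = (\<Sum>j\<in>{0..N}. sm ((-1) ^ j * of_nat (N choose j))
        (Y (-1 + int j) y (Y (M - int j) x vac)))" if "N \<ge> N0" for N M
  proof -
    define s where "s j = ((-1) ^ j * of_nat (N choose j) :: complex)" for j
    define f1 where "f1 j = sm (s j) (Y (M - int j) x (Y (-1 + int j) y vac))" for j
    define f2 where "f2 j = sm (s j) (Y (-1 + int j) y (Y (M - int j) x vac))" for j
    have "\<forall>m n. loc_sum sm N (\<lambda>m n. Y m x (Y n y vac) - Y n y (Y m x vac)) m n = 0"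
      using N0 by (intro loc_sum_eq_0_mono[OF smult_add_left _ that]) blast
    then have "0 = loc_sum sm N (\<lambda>m n. Y m x (Y n y vac) - Y n y (Y m x vac)) (M - int N) (-1)"
      by simp
    also have "\<dots> = sum f1 {0..N} - sum f2 {0..N}"
      by (simp add: loc_sum_def f1_def f2_def s_def smult_diff_right sum_subtractf)
    finally have "0 = sum f1 {0..N} - sum f2 {0..N}" .
    moreover have "f1 j = 0" if "j \<in> {Suc 0..N}" for j
      using that by (simp add: f1_def vacuum_right_nonneg)
    then have "sum f1 {0..N} = f1 0"
      by (subst sum.atLeast_Suc_atMost) simp_all
    ultimately show ?thesis by (simp add: f1_def f2_def s_def vacuum_right_minus_one)
  qed
  then show ?thesis by blast
qed

end

section \<open>Uniqueness\<close>

lemma complex_vertex_algebra_V: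
  "vertex_algebra V_smult V_vac V_T Y \<Longrightarrow> complex_vertex_algebra V_smult V_vac V_T Y"
  by unfold_locales (simp_all add: V_smult_add_left V_smult_smult V_smult_diff_right V_T_smult)

lemma fst_prod_N_vacuum:
  assumes "vertex_algebra V_smult V_vac V_T Y"
  shows "fst (Y m (0, p) V_vac) = 0"
proof -
  interpret complex_vertex_algebra V_smult V_vac V_T Y
    using assms by (rule complex_vertex_algebra_V)
  show ?thesis
  proof (cases "m \<ge> 0")
    case True then show ?thesis by (simp add: vacuum_right_nonneg)
  next
    case False
    then obtain k where "m = - int k - 1" using neg_int_cases by (metis not_le)
    then show ?thesis by (simp add: prod_vacuum_neg V_smult_def fst_funpow_V_T_N)
  qed
qed

context
  fixes Y Y' :: "int \<Rightarrow> V \<Rightarrow> V \<Rightarrow> V"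
  assumes va: "vertex_algebra V_smult V_vac V_T Y" and va': "vertex_algebra V_smult V_vac V_T Y'"
begin

interpretation Y: complex_vertex_algebra V_smult V_vac V_T Y
  using va by (rule complex_vertex_algebra_V)

interpretation Y': complex_vertex_algebra V_smult V_vac V_T Y'
  using va' by (rule complex_vertex_algebra_V)

lemma eq_on_N_right:
  assumes "\<And>m. Y m a V_n = Y' m a V_n"
  shows "Y m a (0, q) = Y' m a (0, q)"
proof (induction q arbitrary: m)
  case 0
  then show ?case using Y.prod_zero_right Y'.prod_zero_right by (metis zero_prod_def)
next
  case (pCons c q)
  show ?case
    unfolding N_pCons
    by (simp only: Y.prod_add_right Y'.prod_add_right Y.prod_smult_right Y'.prod_smult_right
        Y.prod_T_right Y'.prod_T_right assms pCons.IH)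
qed

lemma eq_on_N_left:
  assumes "\<And>k r. Y k y (0, r) = Y' k y (0, r)"
  shows "Y M (0, p) y = Y' M (0, p) y"
proof -
  obtain N1 where N1: "\<forall>N\<ge>N1. \<forall>M. Y M (0, p) y = (\<Sum>j\<in>{0..N}. V_smult ((-1) ^ j * of_nat (N choose j))
      (Y (-1 + int j) y (Y (M - int j) (0, p) V_vac)))"
    using Y.prod_eq_vacuum_sum by blast
  obtain N2 where N2: "\<forall>N\<ge>N2. \<forall>M. Y' M (0, p) y = (\<Sum>j\<in>{0..N}. V_smult ((-1) ^ j * of_nat (N choose j))
      (Y' (-1 + int j) y (Y' (M - int j) (0, p) V_vac)))"
    using Y'.prod_eq_vacuum_sum by blast
  have vac: "Y k (0, p) V_vac = Y' k (0, p) V_vac" for k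
  proof (cases "k \<ge> 0")
    case True then show ?thesis by (simp add: Y.vacuum_right_nonneg Y'.vacuum_right_nonneg)
  next
    case False
    then obtain r where k: "k = - int r - 1" using neg_int_cases by (metis not_le)
    show ?thesis unfolding k Y.prod_vacuum_neg Y'.prod_vacuum_neg ..
  qed
  have vac_N: "Y k y (Y m (0, p) V_vac) = Y' k y (Y' m (0, p) V_vac)" for k m
  proof -
    define z where "z = Y m (0, p) V_vac"
    have "z = (0, snd z)" using fst_prod_N_vacuum[OF va, of m p] by (simp add: z_def prod_eq_iff)
    then have "Y k y z = Y' k y z" using assms by metis
    then show ?thesis by (simp add: z_def vac)
  qed
  define N where "N = max N1 N2"
  have "Y M (0, p) y = (\<Sum>j\<in>{0..N}. V_smult ((-1) ^ j * of_nat (N choose j))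
        (Y (-1 + int j) y (Y (M - int j) (0, p) V_vac)))"
    using N1[rule_format, of N M] by (simp add: N_def)
  also have "\<dots> = (\<Sum>j\<in>{0..N}. V_smult ((-1) ^ j * of_nat (N choose j))
        (Y' (-1 + int j) y (Y' (M - int j) (0, p) V_vac)))"
    by (simp only: vac_N)
  also have "\<dots> = Y' M (0, p) y"
    using N2[rule_format, of N M] by (simp add: N_def)
  finally show ?thesis .
qed

end

lemma V_structure_unique:
  assumes s: "V_structure Y" and s': "V_structure Y'"
  shows "Y = Y'"
proof (intro ext)
  fix m :: int and x y :: V
  have va: "vertex_algebra V_smult V_vac V_T Y" and va': "vertex_algebra V_smult V_vac V_T Y'"
    using s s' by (simp_all add: V_structure_def)
  interpret Y: complex_vertex_algebra V_smult V_vac V_T Y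
    using va by (rule complex_vertex_algebra_V)
  interpret Y': complex_vertex_algebra V_smult V_vac V_T Y'
    using va' by (rule complex_vertex_algebra_V)
  have U_U: "Y k (a, 0) (b, 0) = Y' k (a, 0) (b, 0)" for k a b
    using s s' by (simp add: V_structure_def)
  have U_N: "Y k (a, 0) (0, r) = Y' k (a, 0) (0, r)" for k a r
    using s s' by (intro eq_on_N_right[OF va va']) (simp add: V_structure_def)
  have n_N: "Y k V_n (0, r) = Y' k V_n (0, r)" for k r
    using s s' by (intro eq_on_N_right[OF va va']) (simp add: V_structure_def)
  have N_N: "Y k (0, p) (0, r) = Y' k (0, p) (0, r)" for k p r
    using eq_on_N_left[OF va va' n_N] by (intro eq_on_N_right[OF va va']) (simp add: V_n_def)
  have N_U: "Y k (0, p) (b, 0) = Y' k (0, p) (b, 0)" for k p b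
    using eq_on_N_left[OF va va' U_N] by blast
  obtain u p v q where "x = (u, 0) + (0, p)" "y = (v, 0) + (0, q)" by (cases x, cases y) simp
  then show "Y m x y = Y' m x y"
    by (simp only: Y.prod_add_left Y'.prod_add_left Y.prod_add_right Y'.prod_add_right U_U U_N N_N N_U)
qed

section \<open>The central series\<close>

abbreviation N_part :: "V set" where "N_part \<equiv> range (\<lambda>p. (0, p))"

lemma conf_bracket_V_prod_subset_N:
  assumes "\<And>j a b. j \<ge> 0 \<Longrightarrow> b \<in> B \<Longrightarrow> V_prod j a b \<in> N_part"
  shows "conf_bracket V_smult V_T V_prod UNIV B \<subseteq> N_part"
  unfolding conf_bracket_def cd_span_def
  by (rule Inter_lower) (auto simp: assms zero_prod_def V_smult_def V_T_def)

lemma N_subset_cd_span: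
  assumes "V_n \<in> S"
  shows "N_part \<subseteq> cd_span V_smult V_T S"
  unfolding cd_span_def
proof (intro subsetI InterI)
  fix x M assume "x \<in> N_part" and "M \<in> {M. S \<subseteq> M \<and> 0 \<in> M \<and> (\<forall>x\<in>M. \<forall>y\<in>M. x + y \<in> M)
       \<and> (\<forall>k. \<forall>x\<in>M. V_smult k x \<in> M) \<and> (\<forall>x\<in>M. V_T x \<in> M)}"
  then have M: "V_n \<in> M" "0 \<in> M" "\<forall>x\<in>M. \<forall>y\<in>M. x + y \<in> M"
    "\<forall>k. \<forall>x\<in>M. V_smult k x \<in> M" "\<forall>x\<in>M. V_T x \<in> M"
    using assms by auto
  have "(0, q) \<in> M" for q
  proof (induction q)
    case 0 then show ?case using M by (simp add: zero_prod_def)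
  next
    case (pCons c q) then show ?case using M unfolding N_pCons by blast
  qed
  then show "x \<in> M" using \<open>x \<in> N_part\<close> by blast
qed

lemma conf_bracket_V_prod_eq_N:
  assumes "V_n \<in> B" and "\<And>j a b. j \<ge> 0 \<Longrightarrow> b \<in> B \<Longrightarrow> V_prod j a b \<in> N_part"
  shows "conf_bracket V_smult V_T V_prod UNIV B = N_part"
proof
  show "conf_bracket V_smult V_T V_prod UNIV B \<subseteq> N_part"
    using assms(2) by (rule conf_bracket_V_prod_subset_N)
  have "V_prod 0 (fls_X_inv, 0) V_n = V_n"
    by (simp only: V_prod_U_n) (simp add: V_n_def one_pCons)
  then show "N_part \<subseteq> conf_bracket V_smult V_T V_prod UNIV B"
    unfolding conf_bracket_def using assms(1)
    by (intro N_subset_cd_span) (metis (mono_tags, lifting) UNIV_I mem_Collect_eq order_refl)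
qed

lemma central_series_V_prod: "k \<ge> 1 \<Longrightarrow> central_series V_smult V_T V_prod k = N_part"
proof (induction k rule: dec_induct)
  case base
  show ?case by (simp, rule conf_bracket_V_prod_eq_N) (auto simp: V_prod_def)
next
  case (step k)
  then have "central_series V_smult V_T V_prod (Suc k) = conf_bracket V_smult V_T V_prod UNIV N_part"
    by simp
  also have "\<dots> = N_part"
    by (rule conf_bracket_V_prod_eq_N) (auto simp: V_prod_def V_n_def)
  finally show ?case .
qed

theorem theorem5p5:
  shows "(\<exists>!Y. V_structure Y)
       \<and> (\<forall>Y. V_structure Y
          \<longrightarrow> (\<exists>K. \<forall>k\<ge>K. central_series V_smult V_T Y k = range (\<lambda>p. (0, p))))"
proof
  show "\<exists>!Y. V_structure Y"
    using V_structure_V_prod V_structure_unique by blast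
  show "\<forall>Y. V_structure Y \<longrightarrow> (\<exists>K. \<forall>k\<ge>K. central_series V_smult V_T Y k = range (\<lambda>p. (0, p)))"
    using V_structure_V_prod V_structure_unique central_series_V_prod by blast
qed

end
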